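(* Let $\mathbb{D}^n$ be the unit polydisk in $\mathbb{C}^n$, let $\mu:\mathbb{D}^n\to(0,\infty)$ be a weight, let $\psi\in H(\mathbb{D}^n)$ and let $\varphi=(\varphi_1,\dots,\varphi_n)$ be a holomorphic self-map of $\mathbb{D}^n$. If $W_{\psi,\varphi}:\mathcal{B}(\mathbb{D}^n)\to H^\infty_\mu(\mathbb{D}^n)$, $W_{\psi,\varphi}f=\psi\,(f\circ\varphi)$, is bounded, then $$\max\Big\{\|\psi\|_{H^\infty_\mu},\ \frac{1}{n(1+\log 2)}\vartheta_\mu(\psi,\varphi)\Big\}\le\|W_{\psi,\varphi}\|\le\max\{\|\psi\|_{H^\infty_\mu},\ \vartheta_\mu(\psi,\varphi)\},$$ where $\vartheta_\mu(\psi,\varphi)=\sup_{z\in\mathbb{D}^n}\tfrac12\mu(z)|\psi(z)|\sum_{j=1}^n\log\frac{1+|\varphi_j(z)|}{1-|\varphi_j(z)|}$.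
   Context: $H(\mathbb{D}^n)$ denotes holomorphic functions $\mathbb{D}^n\to\mathbb{C}$. A weight is a continuous strictly positive function $\mu$; $H^\infty_\mu(\mathbb{D}^n)=\{f\in H(\mathbb{D}^n):\|f\|_{H^\infty_\mu}=\sup_{z}\mu(z)|f(z)|<\infty\}$. The Bergman metric of $\mathbb{D}^n$ is $H_z(u,\bar v)=\sum_{j=1}^n\frac{u_j\bar v_j}{(1-|z_j|^2)^2}$. For $f\in H(\mathbb{D}^n)$, $Q_f(z)=\sup_{u\ne 0}\frac{|\sum_k \partial_k f(z)u_k|}{H_z(u,\bar u)^{1/2}}$, $\beta_f=\sup_z Q_f(z)$, $\mathcal{B}(\mathbb{D}^n)=\{f:\beta_f<\infty\}$ with norm $\|f\|_{\mathcal{B}}=|f(0)|+\beta_f$. *)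

theory Defs
  imports "HOL-Analysis.Analysis"
begin

text \<open>The unit polydisk in C^n, with n = CARD('n).\<close>
definition polydisk :: "(complex^'n) set" where
  "polydisk = {z. \<forall>j. cmod (z $ j) < 1}"

definition holo_pd :: "(complex^'n \<Rightarrow> complex) \<Rightarrow> bool" where
  "holo_pd f \<longleftrightarrow> (\<forall>z\<in>polydisk. \<exists>a::complex^'n.
      (f has_derivative (\<lambda>h. \<Sum>j\<in>UNIV. a $ j * h $ j)) (at z))"

definition pdiff :: "(complex^'n \<Rightarrow> complex) \<Rightarrow> 'n \<Rightarrow> complex^'n \<Rightarrow> complex" where
  "pdiff f k z = deriv (\<lambda>w. f (\<chi> i. if i = k then w else z $ i)) (z $ k)"

definition bergman :: "complex^'n \<Rightarrow> complex^'n \<Rightarrow> complex^'n \<Rightarrow> complex" where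
  "bergman z u v = (\<Sum>j\<in>UNIV. u $ j * cnj (v $ j) / complex_of_real ((1 - (cmod (z $ j))^2)^2))"

definition Qf :: "(complex^'n \<Rightarrow> complex) \<Rightarrow> complex^'n \<Rightarrow> real" where
  "Qf f z = Sup {cmod (\<Sum>k\<in>UNIV. pdiff f k z * u $ k) / sqrt (Re (bergman z u u)) | u. u \<noteq> 0}"

definition beta_f :: "(complex^'n \<Rightarrow> complex) \<Rightarrow> real" where
  "beta_f f = Sup (Qf f ` polydisk)"

definition bloch :: "(complex^'n \<Rightarrow> complex) set" where
  "bloch = {f. holo_pd f \<and> bdd_above (Qf f ` polydisk)}"

definition bloch_norm :: "(complex^'n \<Rightarrow> complex) \<Rightarrow> real" where
  "bloch_norm f = cmod (f 0) + beta_f f"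

definition weight_pd :: "(complex^'n \<Rightarrow> real) \<Rightarrow> bool" where
  "weight_pd \<mu> \<longleftrightarrow> continuous_on polydisk \<mu> \<and> (\<forall>z\<in>polydisk. 0 < \<mu> z)"

definition Hinf :: "(complex^'n \<Rightarrow> real) \<Rightarrow> (complex^'n \<Rightarrow> complex) set" where
  "Hinf \<mu> = {f. holo_pd f \<and> bdd_above ((\<lambda>z. \<mu> z * cmod (f z)) ` polydisk)}"

definition Hinf_norm :: "(complex^'n \<Rightarrow> real) \<Rightarrow> (complex^'n \<Rightarrow> complex) \<Rightarrow> real" where
  "Hinf_norm \<mu> f = Sup ((\<lambda>z. \<mu> z * cmod (f z)) ` polydisk)"

definition holo_self_map :: "(complex^'n \<Rightarrow> complex^'n) \<Rightarrow> bool" where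
  "holo_self_map \<phi> \<longleftrightarrow> (\<forall>j. holo_pd (\<lambda>z. \<phi> z $ j)) \<and> \<phi> ` polydisk \<subseteq> polydisk"

definition Wop :: "(complex^'n \<Rightarrow> complex) \<Rightarrow> (complex^'n \<Rightarrow> complex^'n)
    \<Rightarrow> (complex^'n \<Rightarrow> complex) \<Rightarrow> (complex^'n \<Rightarrow> complex)" where
  "Wop \<psi> \<phi> f = (\<lambda>z. \<psi> z * f (\<phi> z))"

definition W_bounded :: "(complex^'n \<Rightarrow> real) \<Rightarrow> (complex^'n \<Rightarrow> complex) \<Rightarrow> (complex^'n \<Rightarrow> complex^'n) \<Rightarrow> bool" where
  "W_bounded \<mu> \<psi> \<phi> \<longleftrightarrow> (\<forall>f\<in>bloch. Wop \<psi> \<phi> f \<in> Hinf \<mu>) \<and>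
     (\<exists>C. \<forall>f\<in>bloch. Hinf_norm \<mu> (Wop \<psi> \<phi> f) \<le> C * bloch_norm f)"

definition W_norm :: "(complex^'n \<Rightarrow> real) \<Rightarrow> (complex^'n \<Rightarrow> complex) \<Rightarrow> (complex^'n \<Rightarrow> complex^'n) \<Rightarrow> real" where
  "W_norm \<mu> \<psi> \<phi> = Sup {Hinf_norm \<mu> (Wop \<psi> \<phi> f) | f. f \<in> bloch \<and> bloch_norm f \<le> 1}"

definition theta_set :: "(complex^'n \<Rightarrow> real) \<Rightarrow> (complex^'n \<Rightarrow> complex) \<Rightarrow> (complex^'n \<Rightarrow> complex^'n) \<Rightarrow> real set" where
  "theta_set \<mu> \<psi> \<phi> = (\<lambda>z. 1/2 * \<mu> z * cmod (\<psi> z) *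
      (\<Sum>j\<in>UNIV. ln ((1 + cmod (\<phi> z $ j)) / (1 - cmod (\<phi> z $ j))))) ` polydisk"

definition theta :: "(complex^'n \<Rightarrow> real) \<Rightarrow> (complex^'n \<Rightarrow> complex) \<Rightarrow> (complex^'n \<Rightarrow> complex^'n) \<Rightarrow> real" where
  "theta \<mu> \<psi> \<phi> = Sup (theta_set \<mu> \<psi> \<phi>)"

end

(* A Bloch function grows at most like the sum of the hyperbolic radii:
   |f w - f 0| <= beta_f f * (sum_j artanh |w_j|).  Integrate f along t |-> t w; the directional
   derivative at t w is at most Q_f (t w) times the Bergman length of w, which is bounded by
   sum_j |w_j| / (1 - t^2 |w_j|^2), the derivative of sum_j artanh (t |w_j|).  Applied at w = phi z
   this gives mu |psi| |f o phi| <= ||psi|| |f 0| + beta_f f * theta, the upper bound.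
   For the lower bound, W 1 = psi gives ||psi|| <= ||W||, and for each w in the polydisk the function
   z |-> (1/n) sum_j artanh (conj (sgn w_j) z_j) lies in the unit ball of the Bloch space and takes the
   value (1/n) sum_j artanh |w_j| at w.  Testing W on it at w = phi z gives theta <= n ||W||, which is
   even sharper than the stated bound with the factor 1 + log 2. *)

theory Submission
  imports Defs
begin

lemma zero_in_polydisk: "0 \<in> polydisk"
  by (simp add: polydisk_def)

lemma one_minus_norm_sq_pos: "z \<in> polydisk \<Longrightarrow> 0 < 1 - (cmod (z $ k))^2"
  by (auto simp: polydisk_def abs_square_less_1)

lemma scaleR_in_polydisk:
  assumes "w \<in> polydisk" "0 \<le> t" "t \<le> 1"
  shows "t *\<^sub>R w \<in> polydisk"
proof -
  have "t * cmod (w $ j) < 1" for j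
  proof -
    have "t * cmod (w $ j) \<le> cmod (w $ j)"
      using assms(2,3) by (simp add: mult_left_le_one_le)
    then show ?thesis
      using assms(1) by (simp add: polydisk_def order_le_less_trans)
  qed
  then show ?thesis
    using assms(2) by (simp add: polydisk_def)
qed

lemma holo_pd_obtain_coeffs:
  assumes "holo_pd f"
  obtains A where "\<And>z. z \<in> polydisk \<Longrightarrow> (f has_derivative (\<lambda>h. \<Sum>j\<in>UNIV. A z $ j * h $ j)) (at z)"
  using bchoice[OF assms[unfolded holo_pd_def]] that by blast

lemma has_derivative_slice:
  fixes z :: "complex^'n"
  shows "((\<lambda>w. (\<chi> i. if i = k then w else z $ i)) has_derivative
    (\<lambda>h. (\<chi> i. if i = k then h else 0))) (at w)"
proof -
  have "bounded_linear ((\<lambda>h. \<chi> i. if i = k then h else 0) :: complex \<Rightarrow> complex^'n)"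
    by (intro linear_conv_bounded_linear[THEN iffD1] linearI) (auto simp: vec_eq_iff)
  then have "((\<lambda>w. (\<chi> i. if i = k then w else 0) + (\<chi> i. if i = k then 0 else z $ i)) has_derivative
      (\<lambda>h. (\<chi> i. if i = k then h else 0))) (at w)"
    by (intro has_derivative_add_const bounded_linear_imp_has_derivative)
  moreover have "(\<lambda>w. (\<chi> i. if i = k then w else 0) + (\<chi> i. if i = k then 0 else z $ i)) =
      (\<lambda>w. (\<chi> i. if i = k then w else z $ i))"
    by (auto simp: vec_eq_iff)
  ultimately show ?thesis
    by simp
qed

lemma pdiff_eq_coeff:
  assumes "(f has_derivative (\<lambda>h. \<Sum>j\<in>UNIV. a $ j * h $ j)) (at z)"
  shows "pdiff f k z = a $ k"
proof -
  have "(\<chi> i. if i = k then z $ k else z $ i) = z"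
    by (auto simp: vec_eq_iff)
  then have "((\<lambda>w. f (\<chi> i. if i = k then w else z $ i)) has_derivative
      (\<lambda>h. \<Sum>j\<in>UNIV. a $ j * (\<chi> i. if i = k then h else 0) $ j)) (at (z $ k))"
    using diff_chain_at[OF has_derivative_slice[where k=k and z=z and w="z $ k"],
        of f "\<lambda>h. \<Sum>j\<in>UNIV. a $ j * h $ j"] assms
    by (simp add: o_def)
  moreover have "(\<lambda>h. \<Sum>j\<in>UNIV. a $ j * (\<chi> i. if i = k then h else 0) $ j) = (*) (a $ k)"
    by (auto simp: if_distrib cong: if_cong)
  ultimately have
    "((\<lambda>w. f (\<chi> i. if i = k then w else z $ i)) has_field_derivative a $ k) (at (z $ k))"
    unfolding has_field_derivative_def by simp
  then show ?thesis
    unfolding pdiff_def by (rule DERIV_imp_deriv)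
qed

lemma Re_bergman_diag:
  "Re (bergman z u u) = (\<Sum>j\<in>UNIV. (cmod (u $ j) / (1 - (cmod (z $ j))^2))^2)"
  unfolding bergman_def Re_sum
proof (rule sum.cong[OF refl])
  fix j
  have "u $ j * cnj (u $ j) = complex_of_real ((cmod (u $ j))^2)"
    by (simp only: complex_norm_square)
  then show "Re (u $ j * cnj (u $ j) / complex_of_real ((1 - (cmod (z $ j))\<^sup>2)\<^sup>2)) =
      (cmod (u $ j) / (1 - (cmod (z $ j))\<^sup>2))\<^sup>2"
    by (simp add: power_divide)
qed

lemma Re_bergman_diag_nonneg: "0 \<le> Re (bergman z u u)"
  unfolding Re_bergman_diag by (simp add: sum_nonneg)

lemma Re_bergman_diag_pos:
  assumes "z \<in> polydisk" "u \<noteq> 0"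
  shows "0 < Re (bergman z u u)"
proof -
  obtain j where "u $ j \<noteq> 0"
    using assms(2) by (auto simp: vec_eq_iff)
  then have "0 < (cmod (u $ j) / (1 - (cmod (z $ j))^2))^2"
    using one_minus_norm_sq_pos[OF assms(1), of j] by simp
  then show ?thesis
    unfolding Re_bergman_diag by (intro sum_pos2[where i=j]) auto
qed

lemma component_le_sqrt_bergman:
  "cmod (u $ k) / (1 - (cmod (z $ k))^2) \<le> sqrt (Re (bergman z u u))"
proof -
  have "(cmod (u $ k) / (1 - (cmod (z $ k))^2))^2 \<le> Re (bergman z u u)"
    unfolding Re_bergman_diag by (rule member_le_sum) auto
  then show ?thesis
    by (rule real_le_rsqrt)
qed

lemma sqrt_bergman_le_sum:
  assumes "z \<in> polydisk"
  shows "sqrt (Re (bergman z u u)) \<le> (\<Sum>j\<in>UNIV. cmod (u $ j) / (1 - (cmod (z $ j))^2))"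
proof -
  have "sqrt (Re (bergman z u u)) = L2_set (\<lambda>j. cmod (u $ j) / (1 - (cmod (z $ j))^2)) UNIV"
    unfolding Re_bergman_diag L2_set_def ..
  also have "\<dots> \<le> (\<Sum>j\<in>UNIV. cmod (u $ j) / (1 - (cmod (z $ j))^2))"
    using one_minus_norm_sq_pos[OF assms] by (intro L2_set_le_sum) (simp add: less_imp_le)
  finally show ?thesis .
qed

lemma norm_linear_form_le_bergman:
  assumes "z \<in> polydisk"
  shows "cmod (\<Sum>k\<in>UNIV. a $ k * u $ k)
    \<le> (\<Sum>k\<in>UNIV. cmod (a $ k) * (1 - (cmod (z $ k))^2)) * sqrt (Re (bergman z u u))"
proof -
  have "cmod (\<Sum>k\<in>UNIV. a $ k * u $ k) \<le> (\<Sum>k\<in>UNIV. cmod (a $ k) * cmod (u $ k))"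
    by (metis (no_types, lifting) norm_mult norm_sum sum.cong)
  also have "\<dots> = (\<Sum>k\<in>UNIV. (cmod (a $ k) * (1 - (cmod (z $ k))^2)) *
      (cmod (u $ k) / (1 - (cmod (z $ k))^2)))"
  proof (intro sum.cong refl)
    fix k
    have "1 - (cmod (z $ k))^2 \<noteq> 0"
      using one_minus_norm_sq_pos[OF assms, of k] by linarith
    then show "cmod (a $ k) * cmod (u $ k) =
        cmod (a $ k) * (1 - (cmod (z $ k))^2) * (cmod (u $ k) / (1 - (cmod (z $ k))^2))"
      by simp
  qed
  also have "\<dots> \<le> (\<Sum>k\<in>UNIV. (cmod (a $ k) * (1 - (cmod (z $ k))^2)) * sqrt (Re (bergman z u u)))"
    using one_minus_norm_sq_pos[OF assms]
    by (intro sum_mono mult_left_mono component_le_sqrt_bergman) (simp add: less_imp_le)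
  finally show ?thesis
    by (simp add: sum_distrib_right)
qed

lemma Qf_eq_Sup_coeffs:
  assumes "(f has_derivative (\<lambda>h. \<Sum>j\<in>UNIV. a $ j * h $ j)) (at z)"
  shows "Qf f z = Sup {cmod (\<Sum>k\<in>UNIV. a $ k * u $ k) / sqrt (Re (bergman z u u)) | u. u \<noteq> 0}"
  unfolding Qf_def pdiff_eq_coeff[OF assms] ..

lemma bergman_quotient_le_coeff_sum:
  assumes "z \<in> polydisk" "u \<noteq> 0"
  shows "cmod (\<Sum>k\<in>UNIV. a $ k * u $ k) / sqrt (Re (bergman z u u))
    \<le> (\<Sum>k\<in>UNIV. cmod (a $ k) * (1 - (cmod (z $ k))^2))"
  using norm_linear_form_le_bergman[OF assms(1)] Re_bergman_diag_pos[OF assms]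
  by (simp add: divide_le_eq)

lemma Qf_le_coeff_sum:
  assumes "z \<in> polydisk" "(f has_derivative (\<lambda>h. \<Sum>j\<in>UNIV. a $ j * h $ j)) (at z)"
  shows "Qf f z \<le> (\<Sum>k\<in>UNIV. cmod (a $ k) * (1 - (cmod (z $ k))^2))"
proof -
  have "(1::complex^'n) \<noteq> 0"
    by (simp add: vec_eq_iff)
  then show ?thesis
    unfolding Qf_eq_Sup_coeffs[OF assms(2)]
    using bergman_quotient_le_coeff_sum[OF assms(1)] by (intro cSup_least) auto
qed

lemma bergman_quotient_le_Qf:
  assumes "z \<in> polydisk" "(f has_derivative (\<lambda>h. \<Sum>j\<in>UNIV. a $ j * h $ j)) (at z)" "u \<noteq> 0"
  shows "cmod (\<Sum>k\<in>UNIV. a $ k * u $ k) / sqrt (Re (bergman z u u)) \<le> Qf f z"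
proof -
  have "bdd_above {cmod (\<Sum>k\<in>UNIV. a $ k * u $ k) / sqrt (Re (bergman z u u)) | u. u \<noteq> 0}"
    using bergman_quotient_le_coeff_sum[OF assms(1)] by (intro bdd_aboveI) blast
  then show ?thesis
    unfolding Qf_eq_Sup_coeffs[OF assms(2)] using assms(3) by (intro cSup_upper) auto
qed

lemma Qf_nonneg:
  assumes "z \<in> polydisk" "(f has_derivative (\<lambda>h. \<Sum>j\<in>UNIV. a $ j * h $ j)) (at z)"
  shows "0 \<le> Qf f z"
proof -
  have one: "(1::complex^'n) \<noteq> 0"
    by (simp add: vec_eq_iff)
  have "0 \<le> cmod (\<Sum>k\<in>UNIV. a $ k * 1 $ k) / sqrt (Re (bergman z 1 1))"
    using Re_bergman_diag_pos[OF assms(1) one] by simp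
  also have "\<dots> \<le> Qf f z"
    by (rule bergman_quotient_le_Qf[OF assms one])
  finally show ?thesis .
qed

lemma norm_linear_form_le_Qf:
  assumes "z \<in> polydisk" "(f has_derivative (\<lambda>h. \<Sum>j\<in>UNIV. a $ j * h $ j)) (at z)"
  shows "cmod (\<Sum>k\<in>UNIV. a $ k * u $ k) \<le> Qf f z * sqrt (Re (bergman z u u))"
proof (cases "u = 0")
  case False
  then show ?thesis
    using bergman_quotient_le_Qf[OF assms False] Re_bergman_diag_pos[OF assms(1) False]
    by (simp add: divide_le_eq)
qed (simp add: Re_bergman_diag)

lemma Qf_le_beta_f:
  assumes "f \<in> bloch" "z \<in> polydisk"
  shows "Qf f z \<le> beta_f f"
  using assms unfolding bloch_def beta_f_def by (auto intro: cSup_upper)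

lemma beta_f_nonneg:
  assumes "f \<in> bloch"
  shows "0 \<le> beta_f f"
proof -
  obtain A where "\<And>z. z \<in> polydisk \<Longrightarrow> (f has_derivative (\<lambda>h. \<Sum>j\<in>UNIV. A z $ j * h $ j)) (at z)"
    using assms holo_pd_obtain_coeffs unfolding bloch_def by blast
  then have "0 \<le> Qf f 0"
    using Qf_nonneg zero_in_polydisk by blast
  also have "\<dots> \<le> beta_f f"
    using Qf_le_beta_f[OF assms zero_in_polydisk] .
  finally show ?thesis .
qed

lemma bloch_norm_nonneg: "f \<in> bloch \<Longrightarrow> 0 \<le> bloch_norm f"
  by (simp add: bloch_norm_def beta_f_nonneg)

lemma Qf_const:
  fixes z :: "complex^'n"
  assumes "z \<in> polydisk"
  shows "Qf (\<lambda>_. c) z = 0"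
proof -
  have "((\<lambda>_. c) has_derivative (\<lambda>h. \<Sum>j\<in>UNIV. (0::complex^'n) $ j * h $ j)) (at z)"
    by simp
  from Qf_le_coeff_sum[OF assms this] Qf_nonneg[OF assms this] show ?thesis
    by simp
qed

lemma const_in_bloch: "(\<lambda>_::complex^'n. c) \<in> bloch"
proof -
  have "((\<lambda>_. c) has_derivative (\<lambda>h. \<Sum>j\<in>UNIV. (0::complex^'n) $ j * h $ j)) (at z)" for z
    by simp
  moreover have "bdd_above (Qf (\<lambda>_::complex^'n. c) ` polydisk)"
    by (intro bdd_aboveI2[where M=0]) (simp add: Qf_const)
  ultimately show ?thesis
    unfolding bloch_def holo_pd_def by blast
qed

lemma bloch_norm_const: "bloch_norm (\<lambda>_::complex^'n. c) = cmod c"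
proof -
  have "Qf (\<lambda>_::complex^'n. c) ` polydisk = {0}"
    using Qf_const zero_in_polydisk by force
  then show ?thesis
    by (simp add: bloch_norm_def beta_f_def)
qed

lemma norm_directional_deriv_le_beta_f:
  assumes "f \<in> bloch" "z \<in> polydisk" "(f has_derivative (\<lambda>h. \<Sum>j\<in>UNIV. a $ j * h $ j)) (at z)"
  shows "cmod (\<Sum>k\<in>UNIV. a $ k * u $ k)
    \<le> beta_f f * (\<Sum>j\<in>UNIV. cmod (u $ j) / (1 - (cmod (z $ j))^2))"
proof -
  have "cmod (\<Sum>k\<in>UNIV. a $ k * u $ k) \<le> Qf f z * sqrt (Re (bergman z u u))"
    by (rule norm_linear_form_le_Qf[OF assms(2,3)])
  also have "\<dots> \<le> beta_f f * (\<Sum>j\<in>UNIV. cmod (u $ j) / (1 - (cmod (z $ j))^2))"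
    using Qf_le_beta_f[OF assms(1,2)] sqrt_bergman_le_sum[OF assms(2)] Qf_nonneg[OF assms(2,3)]
    by (intro mult_mono) (auto simp: Re_bergman_diag_nonneg)
  finally show ?thesis .
qed

lemma artanh_nonneg:
  assumes "0 \<le> x" "x < (1::real)"
  shows "0 \<le> artanh x"
  using assms by (simp add: artanh_def)

lemma has_real_derivative_artanh_sum:
  fixes r :: "'a::finite \<Rightarrow> real"
  assumes "\<And>j. \<bar>t * r j\<bar> < 1"
  shows "((\<lambda>t. \<Sum>j\<in>UNIV. artanh (t * r j)) has_real_derivative (\<Sum>j\<in>UNIV. r j / (1 - (t * r j)^2)))
    (at t within S)"
proof -
  have "((\<lambda>t. artanh (t * r j)) has_real_derivative 1 / (1 - (t * r j)^2) * r j) (at t within S)"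
    for j
    by (rule DERIV_chain2[where g="\<lambda>t. t * r j" and x=t,
          OF artanh_real_has_field_derivative[OF assms]])
      (auto intro!: derivative_eq_intros)
  then show ?thesis
    by (auto intro!: derivative_eq_intros)
qed

lemma norm_increment_le_comparison:
  fixes g :: "real \<Rightarrow> 'a::banach"
  assumes "a \<le> b"
    and "\<And>t. t \<in> {a..b} \<Longrightarrow> (g has_vector_derivative g' t) (at t within {a..b})"
    and "\<And>t. t \<in> {a..b} \<Longrightarrow> (h has_real_derivative h' t) (at t within {a..b})"
    and "\<And>t. t \<in> {a..b} \<Longrightarrow> norm (g' t) \<le> h' t"
  shows "norm (g b - g a) \<le> h b - h a"
proof -
  have g: "(g' has_integral (g b - g a)) {a..b}"
    using assms(1,2) by (intro fundamental_theorem_of_calculus) auto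
  have h: "(h' has_integral (h b - h a)) {a..b}"
    using assms(1,3)
    by (intro fundamental_theorem_of_calculus)
      (auto simp: has_real_derivative_iff_has_vector_derivative)
  have "norm (integral {a..b} g') \<le> integral {a..b} h'"
    using g h assms(4) by (intro integral_norm_bound_integral) auto
  then show ?thesis
    using g h by (simp add: integral_unique)
qed

lemma bloch_growth:
  assumes f: "f \<in> bloch" and w: "w \<in> polydisk"
  shows "cmod (f w - f 0) \<le> beta_f f * (\<Sum>j\<in>UNIV. artanh (cmod (w $ j)))"
proof -
  define r where "r j = cmod (w $ j)" for j
  obtain A where A: "\<And>z. z \<in> polydisk \<Longrightarrow> (f has_derivative (\<lambda>h. \<Sum>j\<in>UNIV. A z $ j * h $ j)) (at z)"
    using f holo_pd_obtain_coeffs unfolding bloch_def by blast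
  have "cmod (f (1 *\<^sub>R w) - f (0 *\<^sub>R w))
      \<le> beta_f f * (\<Sum>j\<in>UNIV. artanh (1 * r j)) - beta_f f * (\<Sum>j\<in>UNIV. artanh (0 * r j))"
  proof (rule norm_increment_le_comparison[where g' = "\<lambda>t. \<Sum>j\<in>UNIV. A (t *\<^sub>R w) $ j * w $ j"
        and h' = "\<lambda>t. beta_f f * (\<Sum>j\<in>UNIV. r j / (1 - (t * r j)^2))"])
    fix t :: real
    assume t: "t \<in> {0..1}"
    then have tw: "t *\<^sub>R w \<in> polydisk"
      using scaleR_in_polydisk[OF w] by simp
    have "((\<lambda>t. t *\<^sub>R w) has_derivative (\<lambda>s. s *\<^sub>R w)) (at t)"
      by (intro bounded_linear_imp_has_derivative bounded_linear_scaleR_left)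
    from diff_chain_at[OF this A[OF tw]]
    show "((\<lambda>t. f (t *\<^sub>R w)) has_vector_derivative (\<Sum>j\<in>UNIV. A (t *\<^sub>R w) $ j * w $ j))
        (at t within {0..1})"
      unfolding has_vector_derivative_def
      by (auto simp: o_def scaleR_sum_right intro: has_derivative_at_withinI)
    have "\<bar>t * r j\<bar> < 1" for j
      using tw by (simp add: r_def polydisk_def abs_mult)
    then show "((\<lambda>t. beta_f f * (\<Sum>j\<in>UNIV. artanh (t * r j))) has_real_derivative
        beta_f f * (\<Sum>j\<in>UNIV. r j / (1 - (t * r j)^2))) (at t within {0..1})"
      by (intro DERIV_cmult has_real_derivative_artanh_sum)
    show "norm (\<Sum>j\<in>UNIV. A (t *\<^sub>R w) $ j * w $ j) \<le> beta_f f * (\<Sum>j\<in>UNIV. r j / (1 - (t * r j)^2))"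
      using norm_directional_deriv_le_beta_f[OF f tw A[OF tw], of w] t
      by (simp add: r_def power_mult_distrib)
  qed simp
  then show ?thesis
    by (simp add: r_def)
qed

lemma has_field_derivative_Ln_ratio:
  assumes "cmod \<zeta> < 1"
  shows "((\<lambda>\<zeta>. (Ln (1 + \<zeta>) - Ln (1 - \<zeta>)) / 2) has_field_derivative 1 / (1 - \<zeta>^2)) (at \<zeta>)"
proof -
  have half: "(2 / x) / 2 = 1 / x" for x :: complex
    by simp
  have Ln: "1 + \<zeta> \<notin> \<real>\<^sub>\<le>\<^sub>0" "1 - \<zeta> \<notin> \<real>\<^sub>\<le>\<^sub>0"
    using assms abs_Re_le_cmod[of \<zeta>] by (auto simp: complex_nonpos_Reals_iff)
  then have "1 + \<zeta> \<noteq> 0" "1 - \<zeta> \<noteq> 0"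
    by auto
  then have "inverse (1 + \<zeta>) - inverse (1 - \<zeta>) * (-1) = 2 / ((1 + \<zeta>) * (1 - \<zeta>))"
    by (simp add: field_simps)
  also have "(1 + \<zeta>) * (1 - \<zeta>) = 1 - \<zeta>^2"
    by (simp add: algebra_simps power2_eq_square)
  finally have eq: "(inverse (1 + \<zeta>) - inverse (1 - \<zeta>) * (-1)) / 2 = 1 / (1 - \<zeta>^2)"
    by (simp only: half)
  have "((\<lambda>\<zeta>. (Ln (1 + \<zeta>) - Ln (1 - \<zeta>)) / 2) has_field_derivative
      (inverse (1 + \<zeta>) - inverse (1 - \<zeta>) * (-1)) / 2) (at \<zeta>)"
    using Ln by (auto intro!: derivative_eq_intros)
  then show ?thesis
    unfolding eq .
qed

lemma Ln_ratio_of_real: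
  assumes "\<bar>r\<bar> < 1"
  shows "(Ln (1 + complex_of_real r) - Ln (1 - complex_of_real r)) / 2 = complex_of_real (artanh r)"
proof -
  have "0 < 1 + r" "0 < 1 - r"
    using assms by auto
  then show ?thesis
    by (simp add: artanh_def ln_div Ln_of_real[symmetric])
qed

lemma one_minus_norm_sq_le_norm:
  assumes "cmod \<zeta> \<le> cmod z"
  shows "1 - (cmod z)^2 \<le> cmod (1 - \<zeta>^2)"
proof -
  have "(cmod \<zeta>)^2 \<le> (cmod z)^2"
    using assms by (simp add: power_mono)
  moreover have "1 - (cmod \<zeta>)^2 \<le> cmod (1 - \<zeta>^2)"
    using norm_triangle_ineq2[of 1 "\<zeta>^2"] by (simp add: norm_power)
  ultimately show ?thesis
    by linarith
qed

lemma cnj_sgn_mult_self: "cnj (sgn x) * x = complex_of_real (cmod x)"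
proof (cases "x = 0")
  case False
  have "cnj (sgn x) * x = (cnj x * x) / complex_of_real (cmod x)"
    by (simp add: sgn_div_norm scaleR_conv_of_real divide_inverse_commute)
  also have "cnj x * x = complex_of_real ((cmod x)^2)"
    by (simp only: complex_norm_square mult.commute)
  finally show ?thesis
    using False by (simp add: power2_eq_square)
qed simp

(* (Ln (1 + z) - Ln (1 - z)) / 2 is the branch of artanh on the unit disc vanishing at 0. *)
definition bloch_test_fn :: "complex^'n \<Rightarrow> complex^'n \<Rightarrow> complex" where
  "bloch_test_fn c z =
    (\<Sum>j\<in>UNIV. (Ln (1 + c $ j * z $ j) - Ln (1 - c $ j * z $ j)) / 2) / of_nat CARD('n)"

lemma bloch_test_fn_has_derivative:
  fixes c z :: "complex^'n"
  assumes "\<And>j. cmod (c $ j) \<le> 1" "z \<in> polydisk"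
  shows "(bloch_test_fn c has_derivative
    (\<lambda>h. \<Sum>j\<in>UNIV. (\<chi> k. c $ k / (of_nat CARD('n) * (1 - (c $ k * z $ k)^2))) $ j * h $ j)) (at z)"
proof -
  have "cmod (c $ j * z $ j) \<le> cmod (z $ j)" for j
    using assms(1)[of j] by (simp add: norm_mult mult_left_le_one_le)
  then have lt: "cmod (c $ j * z $ j) < 1" for j
    using assms(2) order_le_less_trans unfolding polydisk_def by blast
  have lin: "((\<lambda>z. c $ j * z $ j) has_derivative (\<lambda>h. c $ j * h $ j)) (at z)" for j
    by (intro bounded_linear_imp_has_derivative bounded_linear_compose[OF bounded_linear_mult_right]
        bounded_linear_vec_nth)
  have "((\<lambda>z. (Ln (1 + c $ j * z $ j) - Ln (1 - c $ j * z $ j)) / 2) has_derivative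
      (\<lambda>h. c $ j * h $ j / (1 - (c $ j * z $ j)^2))) (at z)" for j
    using diff_chain_at[OF lin has_field_derivative_Ln_ratio[OF lt,
          unfolded has_field_derivative_def]]
    by (simp add: o_def)
  then have "((\<lambda>z. \<Sum>j\<in>UNIV. (Ln (1 + c $ j * z $ j) - Ln (1 - c $ j * z $ j)) / 2) has_derivative
      (\<lambda>h. \<Sum>j\<in>UNIV. c $ j * h $ j / (1 - (c $ j * z $ j)^2))) (at z)"
    by (rule has_derivative_sum)
  from bounded_linear.has_derivative[OF bounded_linear_divide this, of "of_nat CARD('n)"]
  show ?thesis
    unfolding bloch_test_fn_def by (simp add: sum_divide_distrib mult.commute)
qed

lemma Qf_bloch_test_fn_le_one:
  fixes c z :: "complex^'n"
  assumes c: "\<And>j. cmod (c $ j) \<le> 1" and z: "z \<in> polydisk"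
  shows "Qf (bloch_test_fn c) z \<le> 1"
proof -
  let ?N = "real CARD('n)"
  have "Qf (bloch_test_fn c) z
      \<le> (\<Sum>k\<in>UNIV. cmod (c $ k / (of_nat CARD('n) * (1 - (c $ k * z $ k)^2))) *
          (1 - (cmod (z $ k))^2))"
    using Qf_le_coeff_sum[OF z bloch_test_fn_has_derivative[OF c z]] by simp
  also have "\<dots> \<le> (\<Sum>k\<in>(UNIV::'n set). 1 / ?N)"
  proof (rule sum_mono)
    fix k
    have "cmod (c $ k * z $ k) \<le> cmod (z $ k)"
      using c[of k] by (simp add: norm_mult mult_left_le_one_le)
    then have le: "1 - (cmod (z $ k))^2 \<le> cmod (1 - (c $ k * z $ k)^2)"
      by (rule one_minus_norm_sq_le_norm)
    have pos: "0 < 1 - (cmod (z $ k))^2"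
      by (rule one_minus_norm_sq_pos[OF z])
    have "cmod (c $ k / (of_nat CARD('n) * (1 - (c $ k * z $ k)^2))) * (1 - (cmod (z $ k))^2)
        = cmod (c $ k) / ?N * ((1 - (cmod (z $ k))^2) / cmod (1 - (c $ k * z $ k)^2))"
      by (simp add: norm_divide norm_mult)
    also have "\<dots> \<le> 1 / ?N * 1"
      using c[of k] le pos by (intro mult_mono divide_right_mono) (auto simp: divide_le_eq_1)
    finally show "cmod (c $ k / (of_nat CARD('n) * (1 - (c $ k * z $ k)^2))) *
        (1 - (cmod (z $ k))^2) \<le> 1 / ?N"
      by simp
  qed
  also have "\<dots> = 1"
    by simp
  finally show ?thesis .
qed

lemma bloch_test_fn_in_bloch:
  fixes c :: "complex^'n"
  assumes "\<And>j. cmod (c $ j) \<le> 1"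
  shows "bloch_test_fn c \<in> bloch" "bloch_norm (bloch_test_fn c) \<le> 1"
proof -
  have "bdd_above (Qf (bloch_test_fn c) ` polydisk)"
    using Qf_bloch_test_fn_le_one[OF assms] by (intro bdd_aboveI2[where M=1])
  then show "bloch_test_fn c \<in> bloch"
    unfolding bloch_def holo_pd_def using bloch_test_fn_has_derivative[OF assms] by blast
  have "beta_f (bloch_test_fn c) \<le> 1"
    unfolding beta_f_def using Qf_bloch_test_fn_le_one[OF assms] zero_in_polydisk
    by (intro cSup_least) auto
  then show "bloch_norm (bloch_test_fn c) \<le> 1"
    by (simp add: bloch_norm_def bloch_test_fn_def)
qed

lemma bloch_test_fn_conj_sgn_self:
  fixes w :: "complex^'n"
  assumes "w \<in> polydisk"
  shows "bloch_test_fn (\<chi> j. cnj (sgn (w $ j))) w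
    = complex_of_real ((\<Sum>j\<in>UNIV. artanh (cmod (w $ j))) / real CARD('n))"
proof -
  have "\<bar>cmod (w $ j)\<bar> < 1" for j
    using assms by (simp add: polydisk_def)
  then show ?thesis
    by (simp add: bloch_test_fn_def cnj_sgn_mult_self Ln_ratio_of_real)
qed

lemma weight_pd_nonneg: "weight_pd \<mu> \<Longrightarrow> z \<in> polydisk \<Longrightarrow> 0 \<le> \<mu> z"
  by (simp add: weight_pd_def less_imp_le)

lemma Hinf_norm_upper:
  assumes "f \<in> Hinf \<mu>" "z \<in> polydisk"
  shows "\<mu> z * cmod (f z) \<le> Hinf_norm \<mu> f"
  using assms unfolding Hinf_def Hinf_norm_def by (auto intro: cSup_upper)

lemma Hinf_norm_least:
  assumes "\<And>z. z \<in> polydisk \<Longrightarrow> \<mu> z * cmod (f z) \<le> M"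
  shows "Hinf_norm \<mu> f \<le> M"
  unfolding Hinf_norm_def using assms zero_in_polydisk by (intro cSup_least) auto

lemma Hinf_norm_nonneg:
  assumes "weight_pd \<mu>" "f \<in> Hinf \<mu>"
  shows "0 \<le> Hinf_norm \<mu> f"
proof -
  have "0 \<le> \<mu> 0 * cmod (f 0)"
    using weight_pd_nonneg[OF assms(1) zero_in_polydisk] by simp
  also have "\<dots> \<le> Hinf_norm \<mu> f"
    by (rule Hinf_norm_upper[OF assms(2) zero_in_polydisk])
  finally show ?thesis .
qed

lemma Wop_const_one: "Wop \<psi> \<phi> (\<lambda>_. 1) = \<psi>"
  by (simp add: Wop_def)

lemma Hinf_norm_Wop_le_W_norm:
  assumes "W_bounded \<mu> \<psi> \<phi>" "f \<in> bloch" "bloch_norm f \<le> 1"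
  shows "Hinf_norm \<mu> (Wop \<psi> \<phi> f) \<le> W_norm \<mu> \<psi> \<phi>"
proof -
  obtain C where C: "\<And>g. g \<in> bloch \<Longrightarrow> Hinf_norm \<mu> (Wop \<psi> \<phi> g) \<le> C * bloch_norm g"
    using assms(1) by (auto simp: W_bounded_def)
  have "Hinf_norm \<mu> (Wop \<psi> \<phi> g) \<le> \<bar>C\<bar>" if "g \<in> bloch" "bloch_norm g \<le> 1" for g
  proof -
    have "Hinf_norm \<mu> (Wop \<psi> \<phi> g) \<le> C * bloch_norm g"
      by (rule C[OF that(1)])
    also have "\<dots> \<le> \<bar>C\<bar> * bloch_norm g"
      using bloch_norm_nonneg[OF that(1)] by (intro mult_right_mono) auto
    also have "\<dots> \<le> \<bar>C\<bar>"
      using that(2) bloch_norm_nonneg[OF that(1)] by (intro mult_left_le) auto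
    finally show ?thesis .
  qed
  then have "bdd_above {Hinf_norm \<mu> (Wop \<psi> \<phi> g) | g. g \<in> bloch \<and> bloch_norm g \<le> 1}"
    by (intro bdd_aboveI) blast
  then show ?thesis
    unfolding W_norm_def using assms(2,3) by (intro cSup_upper) auto
qed

lemma W_norm_least:
  assumes "\<And>f. f \<in> bloch \<Longrightarrow> bloch_norm f \<le> 1 \<Longrightarrow> Hinf_norm \<mu> (Wop \<psi> \<phi> f) \<le> M"
  shows "W_norm \<mu> \<psi> \<phi> \<le> M"
proof -
  have "Hinf_norm \<mu> (Wop \<psi> \<phi> (\<lambda>_. 1)) \<in> {Hinf_norm \<mu> (Wop \<psi> \<phi> f) | f. f \<in> bloch \<and> bloch_norm f \<le> 1}"
    by (intro CollectI exI[of _ "\<lambda>_. 1"] conjI refl const_in_bloch) (simp add: bloch_norm_const)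
  then show ?thesis
    unfolding W_norm_def using assms by (intro cSup_least) auto
qed

lemma Hinf_norm_le_W_norm:
  assumes "W_bounded \<mu> \<psi> \<phi>"
  shows "Hinf_norm \<mu> \<psi> \<le> W_norm \<mu> \<psi> \<phi>"
  using Hinf_norm_Wop_le_W_norm[OF assms const_in_bloch, of 1]
  by (simp add: Wop_const_one bloch_norm_const)

lemma theta_set_eq:
  "theta_set \<mu> \<psi> \<phi> = (\<lambda>z. \<mu> z * cmod (\<psi> z) * (\<Sum>j\<in>UNIV. artanh (cmod (\<phi> z $ j)))) ` polydisk"
  unfolding theta_set_def artanh_def by (simp add: sum_divide_distrib[symmetric])

lemma theta_point_le_W_norm:
  fixes \<phi> :: "complex^'n \<Rightarrow> complex^'n"
  assumes "weight_pd \<mu>" "holo_self_map \<phi>" "W_bounded \<mu> \<psi> \<phi>" "z \<in> polydisk"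
  shows "\<mu> z * cmod (\<psi> z) * (\<Sum>j\<in>UNIV. artanh (cmod (\<phi> z $ j))) \<le> real CARD('n) * W_norm \<mu> \<psi> \<phi>"
proof -
  let ?N = "real CARD('n)" and ?S = "\<Sum>j\<in>UNIV. artanh (cmod (\<phi> z $ j))"
  define G where "G = bloch_test_fn (\<chi> j. cnj (sgn (\<phi> z $ j)))"
  have c: "cmod ((\<chi> j. cnj (sgn (\<phi> z $ j))) $ j) \<le> 1" for j
    by (cases "\<phi> z $ j = 0") (simp_all add: norm_sgn)
  have G: "G \<in> bloch" "bloch_norm G \<le> 1"
    unfolding G_def by (rule bloch_test_fn_in_bloch[OF c])+
  have \<phi>z: "\<phi> z \<in> polydisk"
    using assms(2,4) by (auto simp: holo_self_map_def)
  have "0 \<le> ?S"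
    using \<phi>z by (intro sum_nonneg artanh_nonneg) (auto simp: polydisk_def)
  then have "cmod (G (\<phi> z)) = ?S / ?N"
    unfolding G_def bloch_test_fn_conj_sgn_self[OF \<phi>z] norm_of_real by simp
  then have "\<mu> z * cmod (\<psi> z) * ?S = ?N * (\<mu> z * cmod (Wop \<psi> \<phi> G z))"
    by (simp add: Wop_def norm_mult)
  also have "\<dots> \<le> ?N * Hinf_norm \<mu> (Wop \<psi> \<phi> G)"
    using assms(3) G(1) Hinf_norm_upper[OF _ assms(4)] by (simp add: W_bounded_def)
  also have "\<dots> \<le> ?N * W_norm \<mu> \<psi> \<phi>"
    using Hinf_norm_Wop_le_W_norm[OF assms(3) G] by simp
  finally show ?thesis .
qed

lemma theta_le_W_norm:
  fixes \<phi> :: "complex^'n \<Rightarrow> complex^'n"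
  assumes "weight_pd \<mu>" "holo_self_map \<phi>" "W_bounded \<mu> \<psi> \<phi>"
  shows "bdd_above (theta_set \<mu> \<psi> \<phi>)" "theta \<mu> \<psi> \<phi> \<le> real CARD('n) * W_norm \<mu> \<psi> \<phi>"
proof -
  show "bdd_above (theta_set \<mu> \<psi> \<phi>)"
    unfolding theta_set_eq by (rule bdd_aboveI2) (rule theta_point_le_W_norm[OF assms])
  show "theta \<mu> \<psi> \<phi> \<le> real CARD('n) * W_norm \<mu> \<psi> \<phi>"
    unfolding theta_def theta_set_eq using theta_point_le_W_norm[OF assms] zero_in_polydisk
    by (intro cSup_least) auto
qed

lemma theta_point_le_theta:
  assumes "bdd_above (theta_set \<mu> \<psi> \<phi>)" "z \<in> polydisk"
  shows "\<mu> z * cmod (\<psi> z) * (\<Sum>j\<in>UNIV. artanh (cmod (\<phi> z $ j))) \<le> theta \<mu> \<psi> \<phi>"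
  using assms unfolding theta_def theta_set_eq by (auto intro: cSup_upper)

lemma theta_nonneg:
  assumes "weight_pd \<mu>" "holo_self_map \<phi>" "bdd_above (theta_set \<mu> \<psi> \<phi>)"
  shows "0 \<le> theta \<mu> \<psi> \<phi>"
proof -
  have "\<phi> 0 \<in> polydisk"
    using assms(2) zero_in_polydisk by (auto simp: holo_self_map_def)
  then have "0 \<le> \<mu> 0 * cmod (\<psi> 0) * (\<Sum>j\<in>UNIV. artanh (cmod (\<phi> 0 $ j)))"
    using weight_pd_nonneg[OF assms(1) zero_in_polydisk]
    by (intro mult_nonneg_nonneg sum_nonneg artanh_nonneg) (auto simp: polydisk_def)
  also have "\<dots> \<le> theta \<mu> \<psi> \<phi>"
    by (rule theta_point_le_theta[OF assms(3) zero_in_polydisk])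
  finally show ?thesis .
qed

lemma Hinf_norm_Wop_le:
  fixes \<phi> :: "complex^'n \<Rightarrow> complex^'n"
  assumes "weight_pd \<mu>" "holo_self_map \<phi>" "\<psi> \<in> Hinf \<mu>" "bdd_above (theta_set \<mu> \<psi> \<phi>)" "f \<in> bloch"
  shows "Hinf_norm \<mu> (Wop \<psi> \<phi> f) \<le> max (Hinf_norm \<mu> \<psi>) (theta \<mu> \<psi> \<phi>) * bloch_norm f"
proof (rule Hinf_norm_least)
  fix z :: "complex^'n"
  assume z: "z \<in> polydisk"
  let ?M = "max (Hinf_norm \<mu> \<psi>) (theta \<mu> \<psi> \<phi>)" and ?m = "\<mu> z * cmod (\<psi> z)"
    and ?S = "\<Sum>j\<in>UNIV. artanh (cmod (\<phi> z $ j))"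
  have m: "0 \<le> ?m"
    using weight_pd_nonneg[OF assms(1) z] by simp
  have "\<phi> z \<in> polydisk"
    using assms(2) z by (auto simp: holo_self_map_def)
  then have growth: "cmod (f (\<phi> z)) \<le> cmod (f 0) + beta_f f * ?S"
    using bloch_growth[OF assms(5)] norm_triangle_ineq2[of "f (\<phi> z)" "f 0"] by fastforce
  have "\<mu> z * cmod (Wop \<psi> \<phi> f z) = ?m * cmod (f (\<phi> z))"
    by (simp add: Wop_def norm_mult)
  also have "\<dots> \<le> ?m * (cmod (f 0) + beta_f f * ?S)"
    by (rule mult_left_mono[OF growth m])
  also have "\<dots> = ?m * cmod (f 0) + beta_f f * (?m * ?S)"
    by (simp add: algebra_simps)
  also have "\<dots> \<le> ?M * cmod (f 0) + beta_f f * ?M"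
    using Hinf_norm_upper[OF assms(3) z] theta_point_le_theta[OF assms(4) z]
      beta_f_nonneg[OF assms(5)]
    by (intro add_mono mult_right_mono mult_left_mono) auto
  finally show "\<mu> z * cmod (Wop \<psi> \<phi> f z) \<le> ?M * bloch_norm f"
    by (simp add: bloch_norm_def algebra_simps)
qed

lemma W_norm_le_max:
  fixes \<phi> :: "complex^'n \<Rightarrow> complex^'n"
  assumes "weight_pd \<mu>" "holo_self_map \<phi>" "W_bounded \<mu> \<psi> \<phi>"
  shows "W_norm \<mu> \<psi> \<phi> \<le> max (Hinf_norm \<mu> \<psi>) (theta \<mu> \<psi> \<phi>)"
proof (rule W_norm_least)
  fix f :: "complex^'n \<Rightarrow> complex"
  assume f: "f \<in> bloch" "bloch_norm f \<le> 1"
  have \<psi>: "\<psi> \<in> Hinf \<mu>"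
    using assms(3) const_in_bloch[of 1] unfolding W_bounded_def by (metis Wop_const_one)
  have "Hinf_norm \<mu> (Wop \<psi> \<phi> f) \<le> max (Hinf_norm \<mu> \<psi>) (theta \<mu> \<psi> \<phi>) * bloch_norm f"
    by (rule Hinf_norm_Wop_le[OF assms(1,2) \<psi> theta_le_W_norm(1)[OF assms] f(1)])
  also have "\<dots> \<le> max (Hinf_norm \<mu> \<psi>) (theta \<mu> \<psi> \<phi>)"
    using f Hinf_norm_nonneg[OF assms(1) \<psi>] by (intro mult_left_le) auto
  finally show "Hinf_norm \<mu> (Wop \<psi> \<phi> f) \<le> max (Hinf_norm \<mu> \<psi>) (theta \<mu> \<psi> \<phi>)" .
qed

theorem theorem5p2:
  fixes \<mu> :: "complex^'n \<Rightarrow> real" and \<psi> :: "complex^'n \<Rightarrow> complex"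
    and \<phi> :: "complex^'n \<Rightarrow> complex^'n"
  assumes "weight_pd \<mu>" and "holo_pd \<psi>" and "holo_self_map \<phi>"
    and "W_bounded \<mu> \<psi> \<phi>"
  shows "bdd_above (theta_set \<mu> \<psi> \<phi>) \<and>
    max (Hinf_norm \<mu> \<psi>) (theta \<mu> \<psi> \<phi> / (real CARD('n) * (1 + ln 2))) \<le> W_norm \<mu> \<psi> \<phi> \<and>
    W_norm \<mu> \<psi> \<phi> \<le> max (Hinf_norm \<mu> \<psi>) (theta \<mu> \<psi> \<phi>)"
proof -
  let ?N = "real CARD('n)"
  have bdd: "bdd_above (theta_set \<mu> \<psi> \<phi>)"
    and theta_le: "theta \<mu> \<psi> \<phi> \<le> ?N * W_norm \<mu> \<psi> \<phi>"
    using theta_le_W_norm[OF assms(1,3,4)] by blast+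
  have "theta \<mu> \<psi> \<phi> / (?N * (1 + ln 2)) \<le> theta \<mu> \<psi> \<phi> / ?N"
  proof (rule divide_left_mono)
    have "0 < 1 + ln (2::real)"
      using ln_gt_zero[of 2] by linarith
    then show "?N \<le> ?N * (1 + ln 2)" "0 < ?N * (1 + ln 2) * ?N"
      by simp_all
  qed (rule theta_nonneg[OF assms(1,3) bdd])
  also have "\<dots> \<le> W_norm \<mu> \<psi> \<phi>"
    using theta_le by (simp add: divide_le_eq mult.commute)
  finally show ?thesis
    using bdd Hinf_norm_le_W_norm[OF assms(4)] W_norm_le_max[OF assms(1,3,4)] by simp
qed

end
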